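(* Suppose $0<\eta<\omega_1$ and $\mathcal{F}_1,\mathcal{F}_2,\dots$ are regular families containing all singletons with $CB(\mathcal{F}_j)<\omega^\eta$ for each $j$. Fix a sequence of positive numbers $(\varpi_n)_{n=1}^\infty$ converging to $0$. Let $Z_0$ be the completion of $c_{00}$ with respect to the norm $[x]_0=\sup\{\varpi_j\|Ex\|_{\ell_1}:j\in\mathbb{N},E\in\mathcal{F}_j\}$. Then the canonical basis of $Z_0$ is $\eta$-weakly null.
   Context: For $E\subset\mathbb{N}$ and $x=\sum a_ne_n\in c_{00}$, $Ex=\sum_{n\in E}a_ne_n$. A family $\mathcal{F}$ of finite subsets of $\mathbb{N}$ is regular if it is hereditary (closed under subsets), spreading (if $(m_i)_{i=1}^k\in\mathcal{F}$ in increasing order and $n_1<\dots<n_k$ with $m_i\leqslant n_i$, then $(n_i)_{i=1}^k\in\mathcal{F}$) and compact in $2^{\mathbb{N}}\cong\{0,1\}^{\mathbb{N}}$. $CB(\mathcal{F})$ is the Cantor–Bendixson index: $\mathcal{F}'$ removes maximal members, iterate transfinitely (intersections at limits), $CB(\mathcal{F})$ is the least $\xi$ with $\mathcal{F}^\xi=\varnothing$. Schreier families: $\mathcal{S}_0=\{\varnothing\}\cup\{\{n\}\}$; $\mathcal{S}=\{\varnothing\}\cup\{E:|E|\leqslant\min E\}$; $\mathcal{G}[\mathcal{F}]=\{\varnothing\}\cup\{\bigcup_{i=1}^nE_i:\varnothing\neq E_i\in\mathcal{F},\max E_i<\min E_{i+1},(\min E_i)\in\mathcal{G}\}$; $\mathcal{S}_{\xi+1}=\mathcal{S}[\mathcal{S}_\xi]$;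 for limit $\xi$, with fixed $\xi_n\uparrow\xi$, $\mathcal{S}_{\xi_n+1}\subset\mathcal{S}_{\xi_{n+1}}$, $\mathcal{S}_\xi=\{\varnothing\}\cup\{E\neq\varnothing:E\in\mathcal{S}_{\xi_{\min E}+1}\}$. For $\xi<\omega_1$, a bounded sequence $(x_n)$ is an $\ell_1^\xi+$-spreading model if $\inf\{\|x\|:F\in\mathcal{S}_\xi,x\in\mathrm{co}(x_n:n\in F)\}>0$; it is $\xi$-weakly null if no subsequence is an $\ell_1^\xi+$-spreading model. *)

theory Defs
  imports "HOL-Analysis.Analysis"
begin

text \<open>The paper's \<open>\<nat>\<close> is \<open>{1,2,...}\<close>; we use HOL's \<open>nat\<close> and
  restrict to positive indices. Vectors of \<open>c\<^sub>0\<^sub>0\<close> are functions \<open>nat \<Rightarrow> real\<close>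
  (coordinate \<open>n\<close> = coefficient of \<open>e\<^sub>n\<close>).\<close>

text \<open>A countable ordinal is represented by a tree: \<open>OZ\<close> = 0, \<open>OS a\<close> = a+1,
  \<open>OL f\<close> = sup of the \<open>f n\<close>. Every ordinal \<open>< \<omega>\<^sub>1\<close> has such a notation.
  The limit node also carries the fundamental sequence used for Schreier families.\<close>

datatype cord = OZ | OS cord | OL "nat \<Rightarrow> cord"

inductive ole :: "cord \<Rightarrow> cord \<Rightarrow> bool" where
  ole_zero: "ole OZ b"
| ole_suc: "ole a b \<Longrightarrow> ole (OS a) (OS b)"
| ole_limR: "ole a (f n) \<Longrightarrow> ole a (OL f)"
| ole_limL: "(\<And>n. ole (f n) b) \<Longrightarrow> ole (OL f) b"

definition olt :: "cord \<Rightarrow> cord \<Rightarrow> bool" where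
  "olt a b \<longleftrightarrow> ole (OS a) b"

primrec oadd :: "cord \<Rightarrow> cord \<Rightarrow> cord" where
  "oadd a OZ = a"
| "oadd a (OS b) = OS (oadd a b)"
| "oadd a (OL f) = OL (\<lambda>n. oadd a (f n))"

primrec omult_nat :: "cord \<Rightarrow> nat \<Rightarrow> cord" where
  "omult_nat a 0 = OZ"
| "omult_nat a (Suc n) = oadd (omult_nat a n) a"

primrec omega_pow :: "cord \<Rightarrow> cord" where
  "omega_pow OZ = OS OZ"
| "omega_pow (OS a) = OL (\<lambda>n. omult_nat (omega_pow a) n)"
| "omega_pow (OL f) = OL (\<lambda>n. omega_pow (f n))"

definition fin_subsets :: "nat set set" where
  "fin_subsets = {E. finite E \<and> E \<subseteq> {1..}}"

definition hereditary :: "nat set set \<Rightarrow> bool" where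
  "hereditary \<F> \<longleftrightarrow> (\<forall>E\<in>\<F>. \<forall>G. G \<subseteq> E \<longrightarrow> G \<in> \<F>)"

definition spreading :: "nat set set \<Rightarrow> bool" where
  "spreading \<F> \<longleftrightarrow> (\<forall>ms ns. sorted_wrt (<) ms \<and> sorted_wrt (<) ns \<and> length ms = length ns
      \<and> set ms \<in> \<F> \<and> (\<forall>i<length ms. ms ! i \<le> ns ! i) \<longrightarrow> set ns \<in> \<F>)"

text \<open>Compactness in \<open>2\<^sup>\<nat> \<cong> {0,1}\<^sup>\<nat>\<close> (product topology), via indicator functions.\<close>
definition compact_family :: "nat set set \<Rightarrow> bool" where
  "compact_family \<F> \<longleftrightarrow> compact ((\<lambda>E. indicator E :: nat \<Rightarrow> real) ` \<F>)"

definition regular_family :: "nat set set \<Rightarrow> bool" where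
  "regular_family \<F> \<longleftrightarrow> \<F> \<subseteq> fin_subsets \<and> hereditary \<F> \<and> spreading \<F> \<and> compact_family \<F>"

definition contains_singletons :: "nat set set \<Rightarrow> bool" where
  "contains_singletons \<F> \<longleftrightarrow> (\<forall>n\<ge>1. {n} \<in> \<F>)"

definition cb_deriv :: "nat set set \<Rightarrow> nat set set" where
  "cb_deriv \<F> = {E\<in>\<F>. \<exists>G\<in>\<F>. E \<subset> G}"

primrec cb_iter :: "nat set set \<Rightarrow> cord \<Rightarrow> nat set set" where
  "cb_iter \<F> OZ = \<F>"
| "cb_iter \<F> (OS a) = cb_deriv (cb_iter \<F> a)"
| "cb_iter \<F> (OL f) = (\<Inter>n. cb_iter \<F> (f n))"

text \<open>\<open>CB(\<F>) < \<alpha>\<close>: the least \<open>\<xi>\<close> with \<open>\<F>\<^sup>\<xi> = \<emptyset>\<close> is below \<open>\<alpha>\<close>,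
  i.e. some \<open>\<xi> < \<alpha>\<close> has \<open>\<F>\<^sup>\<xi> = \<emptyset>\<close>.\<close>
definition cb_less :: "nat set set \<Rightarrow> cord \<Rightarrow> bool" where
  "cb_less \<F> \<alpha> \<longleftrightarrow> (\<exists>\<xi>. olt \<xi> \<alpha> \<and> cb_iter \<F> \<xi> = {})"

definition schreier0 :: "nat set set" where
  "schreier0 = {{}} \<union> {{n} | n. n \<ge> 1}"

definition schreier1 :: "nat set set" where
  "schreier1 = {{}} \<union> {E. finite E \<and> E \<subseteq> {1..} \<and> card E \<le> Min E}"

definition fam_comp :: "nat set set \<Rightarrow> nat set set \<Rightarrow> nat set set" where
  "fam_comp \<G> \<F> = {{}} \<union> {\<Union>(set Es) | Es. Es \<noteq> [] \<and> (\<forall>E\<in>set Es. E \<in> \<F> \<and> E \<noteq> {})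
      \<and> (\<forall>i. Suc i < length Es \<longrightarrow> Max (Es ! i) < Min (Es ! Suc i))
      \<and> Min ` set Es \<in> \<G>}"

primrec schreier :: "cord \<Rightarrow> nat set set" where
  "schreier OZ = schreier0"
| "schreier (OS a) = fam_comp schreier1 (schreier a)"
| "schreier (OL f) = {{}} \<union> {E. E \<noteq> {} \<and> E \<in> fam_comp schreier1 (schreier (f (Min E)))}"

text \<open>Admissible notations: at every limit node \<open>\<xi> = OL f\<close> the fundamental sequence
  \<open>\<xi>\<^sub>1 < \<xi>\<^sub>2 < \<dots>\<close> (indices \<open>n \<ge> 1\<close>; the unused \<open>f 0\<close> does not exceed \<open>f 1\<close>,
  so \<open>\<xi> = sup\<^sub>n \<xi>\<^sub>n\<close>) is strictly increasing and satisfies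
  \<open>\<S>\<^bsub>\<xi>\<^sub>n+1\<^esub> \<subseteq> \<S>\<^bsub>\<xi>\<^sub>n\<^sub>+\<^sub>1\<^esub>\<close>.\<close>
primrec admissible :: "cord \<Rightarrow> bool" where
  "admissible OZ = True"
| "admissible (OS a) = admissible a"
| "admissible (OL f) = ((\<forall>n. admissible (f n)) \<and> ole (f 0) (f 1)
      \<and> (\<forall>n\<ge>1. olt (f n) (f (Suc n)))
      \<and> (\<forall>n\<ge>1. schreier (OS (f n)) \<subseteq> schreier (f (Suc n))))"

text \<open>\<open>N\<close> is a norm on \<open>c\<^sub>0\<^sub>0\<close>, \<open>x\<close> a sequence \<open>(x\<^sub>n)\<^sub>n\<^sub>\<ge>\<^sub>1\<close> in \<open>c\<^sub>0\<^sub>0\<close>.\<close>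
definition bounded_seq :: "((nat \<Rightarrow> real) \<Rightarrow> real) \<Rightarrow> (nat \<Rightarrow> nat \<Rightarrow> real) \<Rightarrow> bool" where
  "bounded_seq N x \<longleftrightarrow> (\<exists>M. \<forall>n\<ge>1. N (x n) \<le> M)"

definition l1_spreading_model ::
  "((nat \<Rightarrow> real) \<Rightarrow> real) \<Rightarrow> cord \<Rightarrow> (nat \<Rightarrow> nat \<Rightarrow> real) \<Rightarrow> bool" where
  "l1_spreading_model N \<xi> x \<longleftrightarrow> bounded_seq N x \<and>
     (\<exists>\<delta>>0. \<forall>F\<in>schreier \<xi>. \<forall>a::nat \<Rightarrow> real.
        (\<forall>n\<in>F. a n \<ge> 0) \<and> (\<Sum>n\<in>F. a n) = 1 \<longrightarrow> N (\<lambda>i. \<Sum>n\<in>F. a n * x n i) \<ge> \<delta>)"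

definition weakly_null_xi ::
  "((nat \<Rightarrow> real) \<Rightarrow> real) \<Rightarrow> cord \<Rightarrow> (nat \<Rightarrow> nat \<Rightarrow> real) \<Rightarrow> bool" where
  "weakly_null_xi N \<xi> x \<longleftrightarrow> bounded_seq N x \<and>
     (\<forall>k. strict_mono k \<longrightarrow> \<not> l1_spreading_model N \<xi> (x \<circ> k))"

definition unit_vec :: "nat \<Rightarrow> nat \<Rightarrow> real" where
  "unit_vec n = (\<lambda>i. if i = n then 1 else 0)"

definition z0_norm :: "(nat \<Rightarrow> real) \<Rightarrow> (nat \<Rightarrow> nat set set) \<Rightarrow> (nat \<Rightarrow> real) \<Rightarrow> real" where
  "z0_norm w \<F> x = Sup {w j * (\<Sum>i\<in>E. \<bar>x i\<bar>) | j E. j \<ge> 1 \<and> E \<in> \<F> j}"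

end

theory Submission
  imports Defs
begin

(* Since \<varpi>\<^sub>j \<rightarrow> 0, for a subsequence (e\<^sub>k\<^sub>n) and a candidate constant \<delta> > 0 only the
   finitely many families \<F>\<^sub>j with \<varpi>\<^sub>j \<ge> \<delta>/2 matter, and pulled back along k they are still
   hereditary with Cantor-Bendixson index at most \<omega>^\<eta>. So it suffices that, for finitely many
   hereditary families of index at most \<omega>^\<beta> and every \<epsilon> > 0, some \<S>\<^sub>\<beta>-set carries a convex
   combination giving mass at most \<epsilon> to every member of every family.

   This is proved by induction on \<beta>; limits pass to a term of the fundamental sequence. For
   \<beta>+1, pick N such that the (\<omega>^\<beta>\<cdot>N)-th derived families are empty and average
   m \<ge> 2N/\<epsilon> successive \<S>\<^sub>\<beta>-averages, each \<epsilon>/2-thin on the links, inside the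
   (\<omega>^\<beta>\<cdot>r)-th derived families, of subsets of the earlier blocks; these links have index at
   most \<omega>^\<beta>. A member E can then be heavy on fewer than N blocks, since each heavy block
   pushes the trace of E one derivative deeper, so E receives mass at most N/m + \<epsilon>/2 \<le> \<epsilon>. *)

section \<open>Ordinal notations\<close>

lemma ole_refl: "ole a a"
proof (induction a)
  case (OL f) then show ?case by (metis ole_limL ole_limR rangeI)
qed (auto intro: ole.intros)

lemma ole_OS_trans: "ole x c \<Longrightarrow> x = OS b \<Longrightarrow> (\<And>c. ole b c \<Longrightarrow> ole a c) \<Longrightarrow> ole (OS a) c"
  by (induction x c rule: ole.induct) (auto intro: ole.intros)

lemma ole_OL_trans: "ole x c \<Longrightarrow> x = OL f \<Longrightarrow> (\<And>c. ole (f n) c \<Longrightarrow> ole a c) \<Longrightarrow> ole a c"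
  by (induction x c rule: ole.induct) (auto intro: ole.intros)

lemma ole_trans: "ole a b \<Longrightarrow> ole b c \<Longrightarrow> ole a c"
proof (induction a b arbitrary: c rule: ole.induct)
  case (ole_suc a b) then show ?case using ole_OS_trans by blast
next
  case (ole_limR a f n) then show ?case using ole_OL_trans by blast
qed (auto intro: ole.intros)

lemma ole_OS_self: "ole a (OS a)"
proof (induction a)
  case (OL f)
  have "ole (f n) (OS (OL f))" for n
    using OL.IH ole_suc[OF ole_limR[OF ole_refl]] ole_trans by (metis rangeI)
  then show ?case by (rule ole_limL)
qed (auto intro: ole.intros)

lemma olt_imp_ole: "olt a b \<Longrightarrow> ole a b"
  unfolding olt_def using ole_OS_self ole_trans by blast

lemma ole_oadd_self: "ole a (oadd a b)"
proof (induction b)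
  case OZ then show ?case by (simp add: ole_refl)
next
  case (OS b) then show ?case using ole_OS_self ole_trans by simp
next
  case (OL f) then show ?case by (simp, meson ole_limR rangeI)
qed

lemma oadd_mono_right: "ole b b' \<Longrightarrow> ole (oadd a b) (oadd a b')"
  by (induction b b' rule: ole.induct) (simp_all add: ole_oadd_self ole.intros)

lemma oadd_mono_left: "ole a a' \<Longrightarrow> ole (oadd a b) (oadd a' b)"
proof (induction b)
  case (OL f) then show ?case by (simp, meson ole.ole_limL ole.ole_limR rangeI)
qed (simp_all add: ole.ole_suc)

lemma omult_nat_mono: "ole a a' \<Longrightarrow> ole (omult_nat a n) (omult_nat a' n)"
  by (induction n) (auto simp: ole_refl intro: ole_trans oadd_mono_left oadd_mono_right)

lemma omult_nat_mono_right: "r \<le> r' \<Longrightarrow> ole (omult_nat a r) (omult_nat a r')"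
  by (induction r' rule: dec_induct) (auto simp: ole_refl intro: ole_trans ole_oadd_self)

lemma ole_one_omega_pow: "ole (OS OZ) (omega_pow b)"
proof (induction b)
  case OZ then show ?case by (simp add: ole_refl)
next
  case (OS b)
  have "ole (OS OZ) (omult_nat (omega_pow b) 1)"
    using OS ole_trans oadd_mono_right by fastforce
  then show ?case by (simp del: omult_nat.simps, meson ole_limR)
next
  case (OL f) then show ?case by (simp, meson ole_limR rangeI)
qed

lemma omega_pow_mono: "ole a b \<Longrightarrow> ole (omega_pow a) (omega_pow b)"
proof (induction a b rule: ole.induct)
  case (ole_zero b) then show ?case by (simp add: ole_one_omega_pow)
next
  case (ole_suc a b) then show ?case by (simp, meson ole.ole_limL ole.ole_limR omult_nat_mono)
qed (simp_all add: ole.ole_limR ole.ole_limL)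

lemma admissible_OL_mono:
  assumes adm: "admissible (OL f)" and "n \<le> n'"
  shows "ole (f n) (f n')"
  using assms(2)
proof (induction n' rule: dec_induct)
  case base then show ?case by (rule ole_refl)
next
  case (step q)
  have "ole (f q) (f (Suc q))" using adm by (cases "q = 0") (auto intro: olt_imp_ole)
  then show ?case using step.IH ole_trans by blast
qed

section \<open>Cantor-Bendixson derivatives\<close>

lemma cb_iter_subset: "cb_iter H \<alpha> \<subseteq> H"
  by (induction \<alpha>) (auto simp: cb_deriv_def)

lemma cb_deriv_mono: "A \<subseteq> B \<Longrightarrow> cb_deriv A \<subseteq> cb_deriv B"
  unfolding cb_deriv_def by blast

lemma cb_iter_antimono: "ole \<alpha> \<beta> \<Longrightarrow> cb_iter H \<beta> \<subseteq> cb_iter H \<alpha>"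
  by (induction \<alpha> \<beta> rule: ole.induct) (auto simp: cb_iter_subset cb_deriv_mono)

lemma cb_iter_oadd: "cb_iter H (oadd \<alpha> \<beta>) = cb_iter (cb_iter H \<alpha>) \<beta>"
  by (induction \<beta>) auto

lemma cb_less_imp_cb_iter_empty: "cb_less H \<alpha> \<Longrightarrow> cb_iter H \<alpha> = {}"
  unfolding cb_less_def using cb_iter_antimono olt_imp_ole by blast

lemma hereditary_cb_deriv: "hereditary H \<Longrightarrow> hereditary (cb_deriv H)"
  unfolding hereditary_def cb_deriv_def by (blast intro: subset_psubset_trans)

lemma hereditary_cb_iter: "hereditary H \<Longrightarrow> hereditary (cb_iter H \<alpha>)"
proof (induction \<alpha>)
  case (OL f)
  then have "\<And>n. hereditary (cb_iter H (f n))" by simp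
  then show ?case unfolding hereditary_def by (simp only: cb_iter.simps) blast
qed (simp_all add: hereditary_cb_deriv)

lemma ex_cb_iter_empty_of_OL:
  assumes "hereditary H" and "cb_iter H (OL f) = {}"
  shows "\<exists>n. cb_iter H (f n) = {}"
proof (rule ccontr)
  assume "\<nexists>n. cb_iter H (f n) = {}"
  then have "{} \<in> cb_iter H (f n)" for n
    using hereditary_cb_iter[OF assms(1)] unfolding hereditary_def by blast
  then show False using assms(2) by auto
qed

lemma cb_iter_image:
  assumes "\<And>G G'. G \<in> A \<Longrightarrow> G' \<in> A \<Longrightarrow> G \<subset> G' \<Longrightarrow> \<phi> G \<subset> \<phi> G'"
    and "\<And>G. G \<in> A \<Longrightarrow> \<phi> G \<in> B"
  shows "G \<in> cb_iter A \<alpha> \<Longrightarrow> \<phi> G \<in> cb_iter B \<alpha>"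
proof (induction \<alpha> arbitrary: G)
  case OZ then show ?case using assms(2) by simp
next
  case (OS \<alpha>)
  obtain G' where G: "G \<in> cb_iter A \<alpha>" "G' \<in> cb_iter A \<alpha>" "G \<subset> G'"
    using OS.prems by (auto simp: cb_deriv_def)
  then have "\<phi> G \<subset> \<phi> G'" using assms(1) cb_iter_subset by blast
  moreover have "\<phi> G \<in> cb_iter B \<alpha>" "\<phi> G' \<in> cb_iter B \<alpha>" using G OS.IH by auto
  ultimately show ?case unfolding cb_iter.simps cb_deriv_def by blast
qed auto

definition hereditary_cb_le :: "nat set set \<Rightarrow> cord \<Rightarrow> bool" where
  "hereditary_cb_le H \<alpha> \<longleftrightarrow> hereditary H \<and> cb_iter H \<alpha> = {}"

definition link :: "nat set set \<Rightarrow> nat set \<Rightarrow> nat set set" where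
  "link K s = {G. G \<inter> s = {} \<and> s \<union> G \<in> K}"

lemma hereditary_cb_le_link:
  assumes her: "hereditary K" and s: "s \<notin> cb_iter K \<alpha>"
  shows "hereditary_cb_le (link K s) \<alpha>"
proof -
  have "G' \<in> link K s" if "G \<in> link K s" "G' \<subseteq> G" for G G'
  proof -
    have "s \<union> G' \<subseteq> s \<union> G" "s \<union> G \<in> K" "G' \<inter> s = {}"
      using that unfolding link_def by auto
    then show ?thesis using her unfolding hereditary_def link_def by blast
  qed
  then have "hereditary (link K s)" unfolding hereditary_def by blast
  moreover have "s \<union> G \<in> cb_iter K \<alpha>" if "G \<in> cb_iter (link K s) \<alpha>" for G
  proof (rule cb_iter_image[OF _ _ that])
    fix G\<^sub>1 G\<^sub>2 assume "G\<^sub>1 \<in> link K s" "G\<^sub>2 \<in> link K s" "G\<^sub>1 \<subset> G\<^sub>2"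
    then show "s \<union> G\<^sub>1 \<subset> s \<union> G\<^sub>2" unfolding link_def by blast
  qed (simp add: link_def)
  then have "cb_iter (link K s) \<alpha> = {}"
    using hereditary_cb_iter[OF her, of \<alpha>] s unfolding hereditary_def by blast
  ultimately show ?thesis unfolding hereditary_cb_le_def by blast
qed

lemma hereditary_cb_le_preimage:
  fixes k :: "nat \<Rightarrow> nat"
  assumes k: "inj k" and her: "hereditary H" and cb: "cb_iter H \<alpha> = {}"
  shows "hereditary_cb_le {G. k ` G \<in> H} \<alpha>"
proof -
  have "hereditary {G. k ` G \<in> H}"
    using her unfolding hereditary_def by (simp add: image_mono)
  moreover have "k ` G \<in> cb_iter H \<alpha>" if "G \<in> cb_iter {G. k ` G \<in> H} \<alpha>" for G
  proof (rule cb_iter_image[OF _ _ that])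
    fix G\<^sub>1 G\<^sub>2 :: "nat set" assume "G\<^sub>1 \<subset> G\<^sub>2"
    then show "k ` G\<^sub>1 \<subset> k ` G\<^sub>2" using k by (metis image_mono inj_image_eq_iff psubset_eq)
  qed simp
  ultimately show ?thesis using cb unfolding hereditary_cb_le_def by blast
qed

section \<open>Schreier families\<close>

lemma fam_comp_finite:
  assumes "\<And>X. X \<in> F \<Longrightarrow> finite X \<and> X \<subseteq> {1..}" and "E \<in> fam_comp G F"
  shows "finite E \<and> E \<subseteq> {1..}"
proof -
  obtain Es where "E = {} \<or> E = \<Union>(set Es) \<and> (\<forall>X\<in>set Es. X \<in> F)"
    using assms(2) unfolding fam_comp_def by blast
  then show ?thesis using assms(1) by (elim disjE) auto
qed

lemma schreier_finite: "E \<in> schreier \<alpha> \<Longrightarrow> finite E \<and> E \<subseteq> {1..}"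
proof (induction \<alpha> arbitrary: E)
  case OZ then show ?case by (auto simp: schreier0_def)
next
  case (OS \<alpha>) then show ?case using fam_comp_finite by (metis schreier.simps(2))
next
  case (OL f)
  show ?case
  proof (cases "E = {}")
    case False
    then have "E \<in> fam_comp schreier1 (schreier (f (Min E)))" using OL.prems by simp
    then show ?thesis using fam_comp_finite OL.IH by blast
  qed simp
qed

lemma schreier_subset_schreier_OS: "schreier \<alpha> \<subseteq> schreier (OS \<alpha>)"
proof
  fix E assume E: "E \<in> schreier \<alpha>"
  show "E \<in> schreier (OS \<alpha>)"
  proof (cases "E = {}")
    case True then show ?thesis by (simp add: fam_comp_def)
  next
    case False
    then have "Min ` set [E] \<in> schreier1"
      using schreier_finite[OF E] by (auto simp: schreier1_def)
    moreover have "[E] \<noteq> []" "\<forall>X\<in>set [E]. X \<in> schreier \<alpha> \<and> X \<noteq> {}"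
      "\<forall>i. Suc i < length [E] \<longrightarrow> Max ([E] ! i) < Min ([E] ! Suc i)"
      using E False by auto
    ultimately have "\<Union>(set [E]) \<in> fam_comp schreier1 (schreier \<alpha>)"
      unfolding fam_comp_def by blast
    then show ?thesis by simp
  qed
qed

lemma admissible_OL_schreier_subset:
  assumes adm: "admissible (OL f)" and "1 \<le> n" and "n \<le> n'"
  shows "schreier (f n) \<subseteq> schreier (OS (f n'))"
  using assms(3)
proof (induction n' rule: dec_induct)
  case base then show ?case by (rule schreier_subset_schreier_OS)
next
  case (step q)
  have "schreier (OS (f q)) \<subseteq> schreier (f (Suc q))" using adm step.hyps assms(2)
    by (simp del: schreier.simps)
  then show ?case using step.IH schreier_subset_schreier_OS by blast
qed

lemma UN_successive_in_schreier_OS: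
  assumes m: "m \<ge> 1"
    and B: "\<And>i. i < m \<Longrightarrow> B i \<in> schreier \<alpha>" "\<And>i. i < m \<Longrightarrow> B i \<noteq> {}"
    and successive: "\<And>i j x y. i < j \<Longrightarrow> j < m \<Longrightarrow> x \<in> B i \<Longrightarrow> y \<in> B j \<Longrightarrow> x < y"
    and spread: "\<And>i x. i < m \<Longrightarrow> x \<in> B i \<Longrightarrow> m \<le> x"
  shows "(\<Union>i<m. B i) \<in> schreier (OS \<alpha>)"
proof -
  define Es where "Es = map B [0..<m]"
  have set_Es: "set Es = B ` {..<m}" unfolding Es_def by auto
  have B_finite: "finite (B i)" if "i < m" for i using schreier_finite[OF B(1)[OF that]] by simp
  have "Max (Es ! i) < Min (Es ! Suc i)" if "Suc i < length Es" for i
  proof -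
    have "Max (B i) \<in> B i" "Min (B (Suc i)) \<in> B (Suc i)"
      using B_finite B(2) that unfolding Es_def by auto
    then show ?thesis using successive[of i "Suc i"] that unfolding Es_def by auto
  qed
  moreover have "Min ` set Es \<in> schreier1"
  proof -
    have mins: "m \<le> x" if x: "x \<in> Min ` set Es" for x
    proof -
      obtain i where "i < m" "x = Min (B i)" using x unfolding set_Es by auto
      then show ?thesis using Min_in[OF B_finite B(2)] spread by metis
    qed
    have ne: "Min ` set Es \<noteq> {}" using m unfolding Es_def by auto
    have "card (Min ` set Es) \<le> m"
      using card_image_le[of "set Es" Min] card_length[of Es] unfolding Es_def by simp
    also have "m \<le> Min (Min ` set Es)" using mins ne by simp
    finally have "card (Min ` set Es) \<le> Min (Min ` set Es)" .
    moreover have "Min ` set Es \<subseteq> {1..}" using mins m by (meson atLeast_iff order_trans subsetI)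
    ultimately show ?thesis unfolding schreier1_def by simp
  qed
  moreover have "Es \<noteq> []" "\<forall>X\<in>set Es. X \<in> schreier \<alpha> \<and> X \<noteq> {}"
    using m B unfolding set_Es by (auto simp: Es_def)
  ultimately have "\<Union>(set Es) \<in> fam_comp schreier1 (schreier \<alpha>)"
    unfolding fam_comp_def by blast
  then show ?thesis by (simp add: set_Es)
qed

lemma finite_common_index:
  fixes P :: "'a \<Rightarrow> nat \<Rightarrow> bool"
  assumes "finite A" and "\<And>x. x \<in> A \<Longrightarrow> \<exists>n. P x n"
    and "\<And>x n n'. x \<in> A \<Longrightarrow> P x n \<Longrightarrow> n \<le> n' \<Longrightarrow> P x n'"
  shows "\<exists>N\<ge>n\<^sub>0. \<forall>x\<in>A. P x N"
proof -
  obtain n where n: "\<And>x. x \<in> A \<Longrightarrow> P x (n x)" using assms(2) by metis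
  define N where "N = Max (insert n\<^sub>0 (n ` A))"
  have "n\<^sub>0 \<le> N" using assms(1) by (simp add: N_def)
  moreover have "P x N" if "x \<in> A" for x
    using assms(3)[OF that n[OF that]] assms(1) that by (simp add: N_def)
  ultimately show ?thesis by blast
qed

lemma infinite_Int_atLeast:
  fixes M :: "nat set"
  assumes "infinite M"
  shows "infinite (M \<inter> {n..})"
proof
  assume "finite (M \<inter> {n..})"
  then have "finite (M \<inter> {n..} \<union> {..<n})" by simp
  moreover have "M \<subseteq> M \<inter> {n..} \<union> {..<n}" by auto
  ultimately show False using assms finite_subset by blast
qed

lemma successive_choice:
  assumes "\<And>U. finite U \<Longrightarrow> \<exists>B x. finite B \<and> Q U B x"
  obtains B x where "\<And>i::nat. finite (B i)" and "\<And>i. Q (\<Union>j<i. B j) (B i) (x i)"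
proof -
  have "\<forall>U. \<exists>p. finite U \<longrightarrow> finite (fst p) \<and> Q U (fst p) (snd p)"
    using assms by fastforce
  then obtain g where g: "\<And>U. finite U \<Longrightarrow> finite (fst (g U)) \<and> Q U (fst (g U)) (snd (g U))"
    by metis
  define V where "V = rec_nat {} (\<lambda>_ U. U \<union> fst (g U))"
  have V: "V i = (\<Union>j<i. fst (g (V j))) \<and> finite (V i)" for i
  proof (induction i)
    case 0 show ?case by (simp add: V_def)
  next
    case (Suc i)
    have "V (Suc i) = V i \<union> fst (g (V i))" by (simp add: V_def)
    then show ?case using Suc g by (auto simp: lessThan_Suc)
  qed
  show thesis
  proof (rule that[of "\<lambda>i. fst (g (V i))" "\<lambda>i. snd (g (V i))"])
    show "finite (fst (g (V i)))" for i using g V by blast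
    show "Q (\<Union>j<i. fst (g (V j))) (fst (g (V i))) (snd (g (V i)))" for i using g V by metis
  qed
qed

lemma card_marked_steps_less:
  fixes K :: "nat \<Rightarrow> nat set set" and S :: "nat \<Rightarrow> nat set"
  assumes her: "\<And>r. hereditary (K r)" and top: "K N = {}"
    and mono: "\<And>i. i < m \<Longrightarrow> S i \<subseteq> S (Suc i)" and start: "S m \<in> K 0"
    and lower: "\<And>i r. i < m \<Longrightarrow> P i \<Longrightarrow> r < N \<Longrightarrow> S (Suc i) \<in> K r \<Longrightarrow> S i \<in> K (Suc r)"
  shows "card {i. i < m \<and> P i} < N"
proof -
  define c where "c i = card {l. i \<le> l \<and> l < m \<and> P l}" for i
  have c_Suc: "c i = (if P i then Suc (c (Suc i)) else c (Suc i))" if "i < m" for i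
  proof -
    have "{l. i \<le> l \<and> l < m \<and> P l} = (if P i then insert i {l. Suc i \<le> l \<and> l < m \<and> P l}
        else {l. Suc i \<le> l \<and> l < m \<and> P l})"
      using that by (auto simp: le_less Suc_le_eq)
    then show ?thesis unfolding c_def by simp
  qed
  \<comment> \<open>Each marked step in \<open>[i, m)\<close> pushes \<open>S i\<close> one level deeper, up to level \<open>N\<close>.\<close>
  have "S i \<in> K (min (c i) N)" if "i \<le> m" for i
    using that
  proof (induction i rule: inc_induct)
    case base
    have "{l. m \<le> l \<and> l < m \<and> P l} = {}" by auto
    then have "c m = 0" unfolding c_def by (simp only: card.empty)
    then show ?case using start by simp
  next
    case (step n)
    have n: "n < m" using step.hyps by simp
    show ?case
    proof (cases "P n \<and> c (Suc n) < N")
      case True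
      then have "S n \<in> K (Suc (c (Suc n)))" using lower[OF n] step.IH by simp
      then show ?thesis using True c_Suc[OF n] by simp
    next
      case False
      then have "min (c n) N = min (c (Suc n)) N" using c_Suc[OF n] by auto
      then show ?thesis
        using step.IH mono[OF n] her unfolding hereditary_def by metis
    qed
  qed
  from this[of 0] have "min (c 0) N \<noteq> N" using top by auto
  moreover have "c 0 = card {i. i < m \<and> P i}" unfolding c_def by simp
  ultimately show ?thesis by linarith
qed

lemma sum_le_card_exceeding:
  fixes s :: "nat \<Rightarrow> real" and c :: real
  assumes "0 \<le> c" and "\<And>i. i < m \<Longrightarrow> s i \<le> 1"
  shows "(\<Sum>i<m. s i) \<le> real (card {i. i < m \<and> c < s i}) + real m * c"
proof -
  have "(\<Sum>i<m. s i) \<le> (\<Sum>i<m. (if c < s i then 1 else 0) + c)"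
  proof (rule sum_mono)
    fix i assume "i \<in> {..<m}"
    then have "s i \<le> 1" using assms(2) by simp
    then show "s i \<le> (if c < s i then 1 else 0) + c" using assms(1) by auto
  qed
  also have "\<dots> = (\<Sum>i<m. if c < s i then 1 else 0) + real m * c"
    by (simp add: sum.distrib)
  also have "(\<Sum>i<m. if c < s i then 1 else 0) = (\<Sum>i\<in>{i\<in>{..<m}. c < s i}. (1::real))"
    by (rule sum.inter_filter[symmetric]) simp
  also have "\<dots> = real (card {i. i < m \<and> c < s i})" by simp
  finally show ?thesis .
qed

section \<open>Thin averages\<close>

definition convex_weights :: "nat set \<Rightarrow> (nat \<Rightarrow> real) \<Rightarrow> bool" where
  "convex_weights F a \<longleftrightarrow> (\<forall>n\<in>F. 0 \<le> a n) \<and> (\<Sum>n\<in>F. a n) = 1"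

lemma convex_weights_finite: "convex_weights F a \<Longrightarrow> finite F"
  unfolding convex_weights_def by (metis sum.infinite zero_neq_one)

lemma convex_weights_nonempty: "convex_weights F a \<Longrightarrow> F \<noteq> {}"
  unfolding convex_weights_def by auto

lemma convex_weights_mass:
  assumes "convex_weights F a"
  shows "0 \<le> (\<Sum>n\<in>G \<inter> F. a n)" and "(\<Sum>n\<in>G \<inter> F. a n) \<le> 1"
proof -
  have nonneg: "\<forall>n\<in>F. 0 \<le> a n" and total: "(\<Sum>n\<in>F. a n) = 1"
    using assms unfolding convex_weights_def by auto
  show "0 \<le> (\<Sum>n\<in>G \<inter> F. a n)" using nonneg by (intro sum_nonneg) auto
  show "(\<Sum>n\<in>G \<inter> F. a n) \<le> 1"
    using sum_mono2[OF convex_weights_finite[OF assms], of "G \<inter> F" a] nonneg total by auto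
qed

definition thin_average :: "nat set set set \<Rightarrow> real \<Rightarrow> nat set \<Rightarrow> nat set \<Rightarrow> (nat \<Rightarrow> real) \<Rightarrow> bool" where
  "thin_average HH \<epsilon> M F a \<longleftrightarrow>
     F \<subseteq> M \<and> convex_weights F a \<and> (\<forall>H\<in>HH. \<forall>E\<in>H. (\<Sum>n\<in>E \<inter> F. a n) \<le> \<epsilon>)"

definition has_thin_averages :: "cord \<Rightarrow> bool" where
  "has_thin_averages \<beta> \<longleftrightarrow> (\<forall>HH \<epsilon> M.
     finite HH \<and> (\<forall>H\<in>HH. hereditary_cb_le H (omega_pow \<beta>)) \<and> 0 < \<epsilon> \<and> infinite M
       \<longrightarrow> (\<exists>F a. F \<in> schreier \<beta> \<and> thin_average HH \<epsilon> M F a))"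

lemma has_thin_averagesI:
  assumes "\<And>HH \<epsilon> M. finite HH \<Longrightarrow> (\<And>H. H \<in> HH \<Longrightarrow> hereditary_cb_le H (omega_pow \<beta>))
    \<Longrightarrow> 0 < \<epsilon> \<Longrightarrow> infinite M \<Longrightarrow> \<exists>F a. F \<in> schreier \<beta> \<and> thin_average HH \<epsilon> M F a"
  shows "has_thin_averages \<beta>"
  using assms unfolding has_thin_averages_def by blast

lemma has_thin_averagesE:
  assumes "has_thin_averages \<beta>" and "finite HH"
    and "\<And>H. H \<in> HH \<Longrightarrow> hereditary_cb_le H (omega_pow \<beta>)" and "0 < \<epsilon>" and "infinite M"
  obtains F a where "F \<in> schreier \<beta>" and "thin_average HH \<epsilon> M F a"
  using assms unfolding has_thin_averages_def by blast

lemma has_thin_averages_OZ: "has_thin_averages OZ"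
proof (rule has_thin_averagesI)
  fix HH :: "nat set set set" and \<epsilon> :: real and M :: "nat set"
  assume HH: "\<And>H. H \<in> HH \<Longrightarrow> hereditary_cb_le H (omega_pow OZ)" and \<epsilon>: "0 < \<epsilon>" and M: "infinite M"
  have empty: "E = {}" if "H \<in> HH" "E \<in> H" for H E
  proof (rule ccontr)
    assume "E \<noteq> {}"
    then have "{} \<subset> E" by blast
    moreover have "{} \<in> H"
      using HH[OF that(1)] that(2) unfolding hereditary_cb_le_def hereditary_def by blast
    ultimately have "{} \<in> cb_deriv H" using that(2) unfolding cb_deriv_def by blast
    then show False using HH[OF that(1)] by (simp add: hereditary_cb_le_def)
  qed
  obtain n where n: "n \<in> M \<inter> {1..}"
    using infinite_imp_nonempty[OF infinite_Int_atLeast[OF M, of 1]] by blast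
  then have "{n} \<in> schreier OZ" by (auto simp: schreier0_def)
  moreover have "(\<Sum>x\<in>E \<inter> {n}. 1) \<le> \<epsilon>" if "H \<in> HH" "E \<in> H" for H E
    using empty[OF that] \<epsilon> by simp
  then have "thin_average HH \<epsilon> M {n} (\<lambda>_. 1)"
    using n unfolding thin_average_def convex_weights_def by auto
  ultimately show "\<exists>F a. F \<in> schreier OZ \<and> thin_average HH \<epsilon> M F a" by blast
qed

lemma has_thin_averages_OL:
  assumes adm: "admissible (OL f)" and IH: "\<And>n. has_thin_averages (f n)"
  shows "has_thin_averages (OL f)"
proof (rule has_thin_averagesI)
  fix HH :: "nat set set set" and \<epsilon> :: real and M :: "nat set"
  assume fin: "finite HH" and HH: "\<And>H. H \<in> HH \<Longrightarrow> hereditary_cb_le H (omega_pow (OL f))"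
    and \<epsilon>: "0 < \<epsilon>" and M: "infinite M"
  have "\<exists>N\<ge>1. \<forall>H\<in>HH. cb_iter H (omega_pow (f N)) = {}"
  proof (rule finite_common_index[OF fin])
    fix H assume "H \<in> HH"
    then show "\<exists>n. cb_iter H (omega_pow (f n)) = {}"
      using HH ex_cb_iter_empty_of_OL unfolding hereditary_cb_le_def by (metis omega_pow.simps(3))
  next
    fix H n n' assume "cb_iter H (omega_pow (f n)) = {}" and "n \<le> n'"
    then show "cb_iter H (omega_pow (f n')) = {}"
      using cb_iter_antimono[OF omega_pow_mono[OF admissible_OL_mono[OF adm]]] by blast
  qed
  then obtain N where N: "1 \<le> N" "\<And>H. H \<in> HH \<Longrightarrow> hereditary_cb_le H (omega_pow (f N))"
    using HH unfolding hereditary_cb_le_def by blast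
  obtain F a where F: "F \<in> schreier (f N)" and thin: "thin_average HH \<epsilon> (M \<inter> {N..}) F a"
    using has_thin_averagesE[OF IH fin N(2) \<epsilon> infinite_Int_atLeast[OF M]] by blast
  have "F \<noteq> {}" and "F \<subseteq> {N..}"
    using thin convex_weights_nonempty unfolding thin_average_def by auto
  moreover have "Min F \<in> F" using schreier_finite[OF F] \<open>F \<noteq> {}\<close> by simp
  ultimately have "F \<in> schreier (OS (f (Min F)))"
    using admissible_OL_schreier_subset[OF adm N(1)] F by blast
  then have "F \<in> schreier (OL f)" using \<open>F \<noteq> {}\<close> by simp
  moreover have "thin_average HH \<epsilon> M F a" using thin unfolding thin_average_def by blast
  ultimately show "\<exists>F a. F \<in> schreier (OL f) \<and> thin_average HH \<epsilon> M F a" by blast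
qed

lemma thin_average_of_blocks:
  fixes m :: nat and \<epsilon> :: real
  assumes m: "1 \<le> m" and B: "\<And>i. i < m \<Longrightarrow> B i \<subseteq> M"
    and weights: "\<And>i. i < m \<Longrightarrow> convex_weights (B i) (c i)"
    and small: "\<And>H E. H \<in> HH \<Longrightarrow> E \<in> H \<Longrightarrow> (\<Sum>i<m. \<Sum>n\<in>E \<inter> B i. c i n) \<le> m * \<epsilon>"
  shows "thin_average HH \<epsilon> M (\<Union>i<m. B i) (\<lambda>n. (\<Sum>i<m. if n \<in> B i then c i n else 0) / m)"
proof -
  define F where "F = (\<Union>i<m. B i)"
  define a where "a = (\<lambda>n. (\<Sum>i<m. if n \<in> B i then c i n else 0) / real m)"
  have "finite F" using weights convex_weights_finite unfolding F_def by blast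
  have mass: "(\<Sum>n\<in>G \<inter> F. a n) = (\<Sum>i<m. \<Sum>n\<in>G \<inter> B i. c i n) / m" for G
  proof -
    have "(\<Sum>n\<in>G \<inter> F. a n) = (\<Sum>n\<in>G \<inter> F. \<Sum>i<m. if n \<in> B i then c i n else 0) / m"
      unfolding a_def by (simp add: sum_divide_distrib)
    also have "(\<Sum>n\<in>G \<inter> F. \<Sum>i<m. if n \<in> B i then c i n else 0)
        = (\<Sum>i<m. \<Sum>n\<in>G \<inter> F. if n \<in> B i then c i n else 0)"
      by (rule sum.swap)
    also have "\<dots> = (\<Sum>i<m. \<Sum>n\<in>G \<inter> B i. c i n)"
    proof (rule sum.cong[OF refl])
      fix i assume "i \<in> {..<m}"
      then have "{n \<in> G \<inter> F. n \<in> B i} = G \<inter> B i" unfolding F_def by blast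
      then show "(\<Sum>n\<in>G \<inter> F. if n \<in> B i then c i n else 0) = (\<Sum>n\<in>G \<inter> B i. c i n)"
        using sum.inter_filter[of "G \<inter> F" "c i" "\<lambda>n. n \<in> B i"] \<open>finite F\<close> by simp
    qed
    finally show ?thesis .
  qed
  have "\<forall>n\<in>F. 0 \<le> a n"
    using weights unfolding a_def convex_weights_def by (auto intro!: divide_nonneg_nonneg sum_nonneg)
  moreover have "(\<Sum>n\<in>F. a n) = 1"
  proof -
    have "(\<Sum>n\<in>F \<inter> B i. c i n) = 1" if "i < m" for i
      using weights[OF that] that unfolding convex_weights_def F_def by (simp add: Int_absorb1 UN_upper)
    then show ?thesis using mass[of F] m by simp
  qed
  moreover have "(\<Sum>n\<in>E \<inter> F. a n) \<le> \<epsilon>" if "H \<in> HH" "E \<in> H" for H E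
    using mass[of E] small[OF that] m by (simp add: pos_divide_le_eq mult.commute)
  moreover have "F \<subseteq> M" using B unfolding F_def by blast
  ultimately have "thin_average HH \<epsilon> M F a" unfolding thin_average_def convex_weights_def by blast
  then show ?thesis by (simp add: F_def a_def)
qed

text \<open>A block on which \<open>E\<close> is heavy cannot be thin on the link of the trace of \<open>E\<close> on the
  earlier blocks, so that trace lies one derivative deeper than the next one.\<close>
lemma card_heavy_blocks_less:
  fixes K :: "nat \<Rightarrow> nat set set" and B :: "nat \<Rightarrow> nat set" and c :: "nat \<Rightarrow> nat \<Rightarrow> real"
  assumes her: "\<And>r. hereditary (K r)" and top: "K N = {}" and E: "E \<in> K 0"
    and disjoint: "\<And>i. B i \<inter> (\<Union>j<i. B j) = {}"
    and thin: "\<And>i r s G. i < m \<Longrightarrow> r < N \<Longrightarrow> s \<subseteq> (\<Union>j<i. B j) \<Longrightarrow> s \<notin> K (Suc r)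
      \<Longrightarrow> G \<in> link (K r) s \<Longrightarrow> (\<Sum>n\<in>G \<inter> B i. c i n) \<le> \<delta>"
  shows "card {i. i < m \<and> \<delta> < (\<Sum>n\<in>E \<inter> B i. c i n)} < N"
proof (rule card_marked_steps_less[where S = "\<lambda>i. E \<inter> (\<Union>j<i. B j)"])
  show "hereditary (K r)" for r by (rule her)
  show "K N = {}" by (rule top)
  show "E \<inter> (\<Union>j<i. B j) \<subseteq> E \<inter> (\<Union>j<Suc i. B j)" for i by (auto simp: lessThan_Suc)
  show "E \<inter> (\<Union>j<m. B j) \<in> K 0" using her[of 0] E unfolding hereditary_def by blast
  fix i r
  assume i: "i < m" and heavy: "\<delta> < (\<Sum>n\<in>E \<inter> B i. c i n)" and r: "r < N"
    and trace: "E \<inter> (\<Union>j<Suc i. B j) \<in> K r"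
  show "E \<inter> (\<Union>j<i. B j) \<in> K (Suc r)"
  proof (rule ccontr)
    assume "E \<inter> (\<Union>j<i. B j) \<notin> K (Suc r)"
    moreover have "E \<inter> B i \<in> link (K r) (E \<inter> (\<Union>j<i. B j))"
    proof -
      have "E \<inter> (\<Union>j<i. B j) \<union> E \<inter> B i = E \<inter> (\<Union>j<Suc i. B j)" by (auto simp: lessThan_Suc)
      then show ?thesis using disjoint[of i] trace unfolding link_def by auto
    qed
    ultimately have "(\<Sum>n\<in>(E \<inter> B i) \<inter> B i. c i n) \<le> \<delta>" using thin[OF i r] by blast
    then have "(\<Sum>n\<in>E \<inter> B i. c i n) \<le> \<delta>" by (simp add: Int_assoc)
    then show False using heavy by linarith
  qed
qed

lemma successive_thin_averages:
  assumes IH: "has_thin_averages \<beta>"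
    and DD_finite: "\<And>U. finite U \<Longrightarrow> finite (DD U)"
    and DD_cb: "\<And>U D. D \<in> DD U \<Longrightarrow> hereditary_cb_le D (omega_pow \<beta>)"
    and \<epsilon>: "0 < \<epsilon>" and M: "infinite M"
  obtains B c where "\<And>i::nat. B i \<in> schreier \<beta>"
    and "\<And>i. thin_average (DD (\<Union>j<i. B j)) \<epsilon> M (B i) (c i)"
    and "\<And>i j x y. i < j \<Longrightarrow> x \<in> B i \<Longrightarrow> y \<in> B j \<Longrightarrow> x < y"
    and "\<And>i x. x \<in> B i \<Longrightarrow> m < x"
proof -
  \<comment> \<open>Starting each block beyond \<open>m\<close> makes the minima of \<open>m\<close> blocks a Schreier set.\<close>
  define p where "p U = Suc (Max (insert m U))" for U :: "nat set"
  have "\<exists>B c. finite B \<and> B \<in> schreier \<beta> \<and> thin_average (DD U) \<epsilon> (M \<inter> {p U..}) B c"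
    if U: "finite U" for U
  proof -
    obtain B c where "B \<in> schreier \<beta>" "thin_average (DD U) \<epsilon> (M \<inter> {p U..}) B c"
      using has_thin_averagesE[OF IH DD_finite[OF U] DD_cb[of _ U] \<epsilon> infinite_Int_atLeast[OF M]] by blast
    then show ?thesis using schreier_finite by blast
  qed
  then obtain B c where B_finite: "\<And>i::nat. finite (B i)"
    and B: "\<And>i. B i \<in> schreier \<beta> \<and>
      thin_average (DD (\<Union>j<i. B j)) \<epsilon> (M \<inter> {p (\<Union>j<i. B j)..}) (B i) (c i)"
    using successive_choice[where Q = "\<lambda>U B c. B \<in> schreier \<beta> \<and>
      thin_average (DD U) \<epsilon> (M \<inter> {p U..}) B c"] by blast
  have above: "Max (insert m (\<Union>j<i. B j)) < x" if "x \<in> B i" for i x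
    using B[of i] that unfolding thin_average_def p_def by auto
  have finite_U: "finite (\<Union>j<i. B j)" for i using B_finite by blast
  show thesis
  proof (rule that)
    show "B i \<in> schreier \<beta>" for i using B by blast
    show "thin_average (DD (\<Union>j<i. B j)) \<epsilon> M (B i) (c i)" for i
      using B[of i] unfolding thin_average_def by blast
    show "x < y" if "i < j" "x \<in> B i" "y \<in> B j" for i j x y
    proof -
      have "x \<le> Max (insert m (\<Union>k<j. B k))" using finite_U that by (intro Max_ge) auto
      then show ?thesis using above[OF that(3)] by linarith
    qed
    show "m < x" if "x \<in> B i" for i x
    proof -
      have "m \<le> Max (insert m (\<Union>j<i. B j))" using finite_U by simp
      then show ?thesis using above[OF that] by linarith
    qed
  qed
qed

definition derived_links :: "cord \<Rightarrow> nat set set set \<Rightarrow> nat \<Rightarrow> nat set \<Rightarrow> nat set set set" where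
  "derived_links \<beta> HH N U = {link (cb_iter H (omult_nat (omega_pow \<beta>) r)) s | H r s.
     H \<in> HH \<and> r < N \<and> s \<subseteq> U \<and> s \<notin> cb_iter H (omult_nat (omega_pow \<beta>) (Suc r))}"

lemma finite_derived_links:
  assumes "finite HH" and "finite U"
  shows "finite (derived_links \<beta> HH N U)"
proof -
  let ?link = "\<lambda>(H, r, s). link (cb_iter H (omult_nat (omega_pow \<beta>) r)) s"
  have "derived_links \<beta> HH N U \<subseteq> ?link ` (HH \<times> {..<N} \<times> Pow U)"
  proof
    fix D assume "D \<in> derived_links \<beta> HH N U"
    then obtain H r s where "D = link (cb_iter H (omult_nat (omega_pow \<beta>) r)) s"
      and "H \<in> HH" "r < N" "s \<subseteq> U"
      unfolding derived_links_def by blast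
    then show "D \<in> ?link ` (HH \<times> {..<N} \<times> Pow U)" by (intro image_eqI[of _ _ "(H, r, s)"]) auto
  qed
  moreover have "finite (HH \<times> {..<N} \<times> Pow U)" using assms by simp
  ultimately show ?thesis by (meson finite_imageI finite_subset)
qed

lemma hereditary_cb_le_derived_links:
  assumes "\<And>H. H \<in> HH \<Longrightarrow> hereditary H" and "D \<in> derived_links \<beta> HH N U"
  shows "hereditary_cb_le D (omega_pow \<beta>)"
proof -
  obtain H r s where D: "D = link (cb_iter H (omult_nat (omega_pow \<beta>) r)) s" and H: "H \<in> HH"
    and "s \<notin> cb_iter H (omult_nat (omega_pow \<beta>) (Suc r))"
    using assms(2) unfolding derived_links_def by blast
  then have s: "s \<notin> cb_iter (cb_iter H (omult_nat (omega_pow \<beta>) r)) (omega_pow \<beta>)"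
    by (simp add: cb_iter_oadd)
  have "hereditary (cb_iter H (omult_nat (omega_pow \<beta>) r))"
    by (rule hereditary_cb_iter[OF assms(1)[OF H]])
  then show ?thesis unfolding D using s by (rule hereditary_cb_le_link)
qed

lemma ex_cb_iter_omult_nat_empty:
  assumes "finite HH" and "\<And>H. H \<in> HH \<Longrightarrow> hereditary_cb_le H (omega_pow (OS \<beta>))"
  obtains N where "\<And>H. H \<in> HH \<Longrightarrow> cb_iter H (omult_nat (omega_pow \<beta>) N) = {}"
proof -
  have "\<exists>N\<ge>0. \<forall>H\<in>HH. cb_iter H (omult_nat (omega_pow \<beta>) N) = {}"
  proof (rule finite_common_index[OF assms(1)])
    fix H assume "H \<in> HH"
    then show "\<exists>n. cb_iter H (omult_nat (omega_pow \<beta>) n) = {}"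
      using assms(2) ex_cb_iter_empty_of_OL unfolding hereditary_cb_le_def by (metis omega_pow.simps(2))
  next
    fix H n n' assume "cb_iter H (omult_nat (omega_pow \<beta>) n) = {}" and "n \<le> n'"
    then show "cb_iter H (omult_nat (omega_pow \<beta>) n') = {}"
      using cb_iter_antimono[OF omult_nat_mono_right] by blast
  qed
  then show ?thesis using that by blast
qed

lemma sum_heavy_blocks_le:
  fixes c :: "nat \<Rightarrow> nat \<Rightarrow> real" and \<epsilon> :: real
  assumes H: "H \<in> HH" "hereditary H" and E: "E \<in> H"
    and top: "cb_iter H (omult_nat (omega_pow \<beta>) N) = {}"
    and thin: "\<And>i. thin_average (derived_links \<beta> HH N (\<Union>j<i. B j)) (\<epsilon> / 2) M (B i) (c i)"
    and successive: "\<And>i j x y. i < j \<Longrightarrow> x \<in> B i \<Longrightarrow> y \<in> B j \<Longrightarrow> x < y"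
    and \<epsilon>: "0 < \<epsilon>" and N: "real N \<le> real m * (\<epsilon> / 2)"
  shows "(\<Sum>i<m. \<Sum>n\<in>E \<inter> B i. c i n) \<le> m * \<epsilon>"
proof -
  define K where "K r = cb_iter H (omult_nat (omega_pow \<beta>) r)" for r
  have weights: "convex_weights (B i) (c i)" for i using thin[of i] unfolding thin_average_def by blast
  let ?heavy = "{i. i < m \<and> \<epsilon> / 2 < (\<Sum>n\<in>E \<inter> B i. c i n)}"
  have "card ?heavy < N"
  proof (rule card_heavy_blocks_less)
    show "hereditary (K r)" for r unfolding K_def using H(2) by (rule hereditary_cb_iter)
    show "K N = {}" unfolding K_def by (rule top)
    show "E \<in> K 0" unfolding K_def using E by simp
    show "B i \<inter> (\<Union>j<i. B j) = {}" for i
    proof -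
      have "x \<notin> B j" if "x \<in> B i" "j < i" for x j
        using successive[OF that(2) _ that(1)] less_irrefl by blast
      then show ?thesis by blast
    qed
    fix i r s G
    assume "i < m" "r < N" "s \<subseteq> (\<Union>j<i. B j)" "s \<notin> K (Suc r)" and G: "G \<in> link (K r) s"
    then have "link (K r) s \<in> derived_links \<beta> HH N (\<Union>j<i. B j)"
      unfolding derived_links_def K_def using H(1) by blast
    then show "(\<Sum>n\<in>G \<inter> B i. c i n) \<le> \<epsilon> / 2"
      using thin[of i] G unfolding thin_average_def by blast
  qed
  then have "real (card ?heavy) \<le> real N" by simp
  moreover have "(\<Sum>i<m. \<Sum>n\<in>E \<inter> B i. c i n) \<le> real (card ?heavy) + real m * (\<epsilon> / 2)"
    using \<epsilon> convex_weights_mass(2)[OF weights] by (intro sum_le_card_exceeding) auto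
  ultimately show ?thesis using N by linarith
qed

lemma has_thin_averages_OS:
  assumes IH: "has_thin_averages \<beta>"
  shows "has_thin_averages (OS \<beta>)"
proof (rule has_thin_averagesI)
  fix HH :: "nat set set set" and \<epsilon> :: real and M :: "nat set"
  assume fin: "finite HH" and HH: "\<And>H. H \<in> HH \<Longrightarrow> hereditary_cb_le H (omega_pow (OS \<beta>))"
    and \<epsilon>: "0 < \<epsilon>" and M: "infinite M"
  have her: "hereditary H" if "H \<in> HH" for H using HH[OF that] unfolding hereditary_cb_le_def ..
  obtain N where N: "\<And>H. H \<in> HH \<Longrightarrow> cb_iter H (omult_nat (omega_pow \<beta>) N) = {}"
    using ex_cb_iter_omult_nat_empty[OF fin HH] by blast
  obtain m :: nat where m: "1 \<le> m" "real N \<le> real m * (\<epsilon> / 2)"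
  proof -
    obtain n :: nat where "real N / (\<epsilon> / 2) < n" using reals_Archimedean2 by blast
    then have "real N < real n * (\<epsilon> / 2)" using \<epsilon> by (simp add: pos_divide_less_eq)
    then have "real N \<le> real (Suc n) * (\<epsilon> / 2)" using \<epsilon> by (simp add: distrib_right)
    then show ?thesis using that[of "Suc n"] by simp
  qed
  obtain B c where B: "\<And>i::nat. B i \<in> schreier \<beta>"
    and thin: "\<And>i. thin_average (derived_links \<beta> HH N (\<Union>j<i. B j)) (\<epsilon> / 2) M (B i) (c i)"
    and successive: "\<And>i j x y. i < j \<Longrightarrow> x \<in> B i \<Longrightarrow> y \<in> B j \<Longrightarrow> x < y"
    and spread: "\<And>i x. x \<in> B i \<Longrightarrow> m < x"
  proof (rule successive_thin_averages[where m = m and DD = "derived_links \<beta> HH N" and \<epsilon> = "\<epsilon> / 2",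
      OF IH _ _ _ M])
    show "finite (derived_links \<beta> HH N U)" if "finite U" for U
      using fin that by (rule finite_derived_links)
    show "hereditary_cb_le D (omega_pow \<beta>)" if "D \<in> derived_links \<beta> HH N U" for U D
      using her that by (rule hereditary_cb_le_derived_links)
  qed (simp add: \<epsilon>, rule that)
  have weights: "convex_weights (B i) (c i)" and B_M: "B i \<subseteq> M" for i
    using thin[of i] unfolding thin_average_def by blast+
  have "(\<Union>i<m. B i) \<in> schreier (OS \<beta>)"
  proof (rule UN_successive_in_schreier_OS[OF m(1)])
    show "B i \<in> schreier \<beta>" for i by (rule B)
    show "B i \<noteq> {}" for i using weights by (rule convex_weights_nonempty)
    show "x < y" if "i < j" "x \<in> B i" "y \<in> B j" for i j x y using successive that by blast
    show "m \<le> x" if "x \<in> B i" for i x using spread[OF that] by simp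
  qed
  moreover have "thin_average HH \<epsilon> M (\<Union>i<m. B i) (\<lambda>n. (\<Sum>i<m. if n \<in> B i then c i n else 0) / m)"
  proof (rule thin_average_of_blocks[OF m(1) B_M weights])
    fix H E assume H: "H \<in> HH" and E: "E \<in> H"
    show "(\<Sum>i<m. \<Sum>n\<in>E \<inter> B i. c i n) \<le> m * \<epsilon>"
      by (rule sum_heavy_blocks_le[OF H her[OF H] E N[OF H] thin successive \<epsilon> m(2)])
  qed
  ultimately show "\<exists>F a. F \<in> schreier (OS \<beta>) \<and> thin_average HH \<epsilon> M F a" by blast
qed

lemma admissible_has_thin_averages: "admissible \<beta> \<Longrightarrow> has_thin_averages \<beta>"
  by (induction \<beta>) (simp_all add: has_thin_averages_OZ has_thin_averages_OS has_thin_averages_OL)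

section \<open>The space \<open>Z\<^sub>0\<close>\<close>

lemma sum_abs_unit_vec_le_1: "(\<Sum>i\<in>E. \<bar>unit_vec n i\<bar>) \<le> 1"
proof (cases "finite E")
  case True
  then have "(\<Sum>i\<in>E. \<bar>unit_vec n i\<bar>) = (if n \<in> E then 1 else 0)"
    unfolding unit_vec_def by (simp add: sum.delta')
  then show ?thesis by simp
qed simp

lemma sum_abs_average_unit_vec:
  assumes "finite E" and "finite A" and "\<And>n. n \<in> A \<Longrightarrow> 0 \<le> a n"
  shows "(\<Sum>i\<in>E. \<bar>\<Sum>n\<in>A. a n * unit_vec (k n) i\<bar>) = (\<Sum>n\<in>{n. k n \<in> E} \<inter> A. a n)"
proof -
  have "(\<Sum>i\<in>E. \<bar>\<Sum>n\<in>A. a n * unit_vec (k n) i\<bar>) = (\<Sum>i\<in>E. \<Sum>n\<in>A. a n * unit_vec (k n) i)"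
    using assms(3) by (intro sum.cong refl abs_of_nonneg sum_nonneg) (simp add: unit_vec_def)
  also have "\<dots> = (\<Sum>n\<in>A. \<Sum>i\<in>E. a n * unit_vec (k n) i)" by (rule sum.swap)
  also have "\<dots> = (\<Sum>n\<in>A. if k n \<in> E then a n else 0)"
    unfolding unit_vec_def using assms(1) by (simp add: sum.delta' if_distrib cong: if_cong)
  also have "\<dots> = (\<Sum>n\<in>{n. k n \<in> E} \<inter> A. a n)"
    using sum.inter_filter[OF assms(2), of a "\<lambda>n. k n \<in> E"] by (simp add: Int_def conj_commute)
  finally show ?thesis .
qed

lemma z0_norm_le:
  assumes "\<F> 1 \<noteq> {}" and "\<And>j E. 1 \<le> j \<Longrightarrow> E \<in> \<F> j \<Longrightarrow> w j * (\<Sum>i\<in>E. \<bar>x i\<bar>) \<le> c"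
  shows "z0_norm w \<F> x \<le> c"
  unfolding z0_norm_def
proof (rule cSup_least)
  obtain E where "E \<in> \<F> 1" using assms(1) by blast
  then show "{w j * (\<Sum>i\<in>E. \<bar>x i\<bar>) | j E. 1 \<le> j \<and> E \<in> \<F> j} \<noteq> {}" by blast
qed (use assms(2) in blast)

lemma bounded_seq_unit_vec:
  assumes "\<F> 1 \<noteq> {}" and "Bseq w"
  shows "bounded_seq (z0_norm w \<F>) unit_vec"
proof -
  obtain W where W: "\<And>j. \<bar>w j\<bar> \<le> W" using assms(2) by (auto simp: Bseq_def)
  have "w j * (\<Sum>i\<in>E. \<bar>unit_vec n i\<bar>) \<le> W" for j E n
  proof -
    have "w j * (\<Sum>i\<in>E. \<bar>unit_vec n i\<bar>) \<le> \<bar>w j\<bar> * (\<Sum>i\<in>E. \<bar>unit_vec n i\<bar>)"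
      by (intro mult_right_mono abs_ge_self sum_nonneg) simp
    also have "\<dots> \<le> \<bar>w j\<bar> * 1" by (intro mult_left_mono sum_abs_unit_vec_le_1) simp
    finally show ?thesis using W[of j] by simp
  qed
  then show ?thesis unfolding bounded_seq_def using z0_norm_le[where \<F> = \<F>, OF assms(1)] by blast
qed

lemma z0_norm_thin_average_le:
  fixes k :: "nat \<Rightarrow> nat"
  assumes her: "\<And>j. 1 \<le> j \<Longrightarrow> hereditary (\<F> j)"
    and fin: "\<And>j E. 1 \<le> j \<Longrightarrow> E \<in> \<F> j \<Longrightarrow> finite E" and "\<F> 1 \<noteq> {}"
    and w: "\<And>j. 1 \<le> j \<Longrightarrow> 0 \<le> w j \<and> w j \<le> W" and tail: "\<And>j. J \<le> j \<Longrightarrow> w j \<le> c"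
    and "W * \<epsilon> \<le> c"
    and thin: "thin_average ((\<lambda>j. {G. k ` G \<in> \<F> j}) ` {1..<J}) \<epsilon> M A a"
  shows "z0_norm w \<F> (\<lambda>i. \<Sum>n\<in>A. a n * unit_vec (k n) i) \<le> c"
proof (rule z0_norm_le[where \<F> = \<F>, OF \<open>\<F> 1 \<noteq> {}\<close>])
  fix j E assume j: "1 \<le> j" and E: "E \<in> \<F> j"
  have weights: "convex_weights A a" using thin unfolding thin_average_def by blast
  define mass where "mass = (\<Sum>n\<in>{n. k n \<in> E} \<inter> A. a n)"
  have "finite A" using weights by (rule convex_weights_finite)
  moreover have "\<And>n. n \<in> A \<Longrightarrow> 0 \<le> a n" using weights unfolding convex_weights_def by blast
  ultimately have "(\<Sum>i\<in>E. \<bar>\<Sum>n\<in>A. a n * unit_vec (k n) i\<bar>) = mass"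
    unfolding mass_def by (rule sum_abs_average_unit_vec[OF fin[OF j E]])
  moreover have mass: "0 \<le> mass" "mass \<le> 1"
    unfolding mass_def using convex_weights_mass[OF weights] by auto
  moreover have "w j * mass \<le> c"
  proof (cases "J \<le> j")
    case True
    have "w j * mass \<le> w j" using w[OF j] mass by (intro mult_left_le) auto
    then show ?thesis using tail[OF True] by linarith
  next
    case False
    then have "{G. k ` G \<in> \<F> j} \<in> (\<lambda>j. {G. k ` G \<in> \<F> j}) ` {1..<J}"
      using j by (intro image_eqI[where x = j]) auto
    moreover have "k ` {n. k n \<in> E} \<subseteq> E" by blast
    then have "{n. k n \<in> E} \<in> {G. k ` G \<in> \<F> j}"
      using her[OF j] E unfolding hereditary_def by blast
    ultimately have "mass \<le> \<epsilon>" using thin unfolding thin_average_def mass_def by blast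
    then have "w j * mass \<le> W * \<epsilon>" using w[OF j] mass by (intro mult_mono) auto
    then show ?thesis using \<open>W * \<epsilon> \<le> c\<close> by linarith
  qed
  ultimately show "w j * (\<Sum>i\<in>E. \<bar>\<Sum>n\<in>A. a n * unit_vec (k n) i\<bar>) \<le> c" by simp
qed

lemma not_l1_spreading_model_unit_vec:
  fixes k :: "nat \<Rightarrow> nat"
  assumes adm: "admissible \<eta>"
    and her: "\<And>j. 1 \<le> j \<Longrightarrow> hereditary (\<F> j)"
    and fin: "\<And>j E. 1 \<le> j \<Longrightarrow> E \<in> \<F> j \<Longrightarrow> finite E"
    and cb: "\<And>j. 1 \<le> j \<Longrightarrow> cb_iter (\<F> j) (omega_pow \<eta>) = {}"
    and nonempty: "\<F> 1 \<noteq> {}"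
    and wpos: "\<And>j. 1 \<le> j \<Longrightarrow> 0 < w j" and wlim: "w \<longlonglongrightarrow> 0"
    and k: "strict_mono k"
  shows "\<not> l1_spreading_model (z0_norm w \<F>) \<eta> (unit_vec \<circ> k)"
proof
  assume "l1_spreading_model (z0_norm w \<F>) \<eta> (unit_vec \<circ> k)"
  then obtain \<delta> where \<delta>: "0 < \<delta>" and lower: "\<And>A a. A \<in> schreier \<eta> \<Longrightarrow> convex_weights A a
      \<Longrightarrow> \<delta> \<le> z0_norm w \<F> (\<lambda>i. \<Sum>n\<in>A. a n * unit_vec (k n) i)"
    unfolding l1_spreading_model_def convex_weights_def by auto
  obtain W where W: "0 < W" "\<And>j. \<bar>w j\<bar> \<le> W"
    using convergent_imp_Bseq[OF convergentI[OF wlim]] by (auto elim: BseqE)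
  obtain J where J: "\<And>j. J \<le> j \<Longrightarrow> \<bar>w j\<bar> < \<delta> / 2"
    using LIMSEQ_D[OF wlim, of "\<delta> / 2"] \<delta> by auto
  define HH where "HH = (\<lambda>j. {G. k ` G \<in> \<F> j}) ` {1..<J}"
  define \<epsilon> where "\<epsilon> = \<delta> / (2 * W)"
  have HH_cb: "hereditary_cb_le H (omega_pow \<eta>)" if "H \<in> HH" for H
    using that hereditary_cb_le_preimage[OF strict_mono_imp_inj_on[OF k] her cb] by (auto simp: HH_def)
  have "finite HH" and "0 < \<epsilon>" using \<delta> W(1) by (simp_all add: HH_def \<epsilon>_def)
  then obtain A a where A: "A \<in> schreier \<eta>" and thin: "thin_average HH \<epsilon> UNIV A a"
    using has_thin_averagesE[OF admissible_has_thin_averages[OF adm] \<open>finite HH\<close> HH_cb \<open>0 < \<epsilon>\<close>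
      infinite_UNIV_nat] by blast
  have "\<delta> \<le> z0_norm w \<F> (\<lambda>i. \<Sum>n\<in>A. a n * unit_vec (k n) i)"
    using lower[OF A] thin unfolding thin_average_def by blast
  moreover have "z0_norm w \<F> (\<lambda>i. \<Sum>n\<in>A. a n * unit_vec (k n) i) \<le> \<delta> / 2"
  proof (rule z0_norm_thin_average_le[where \<F> = \<F>, OF her fin nonempty])
    show "0 \<le> w j \<and> w j \<le> W" if "1 \<le> j" for j using wpos[OF that] W(2)[of j] by auto
    show "w j \<le> \<delta> / 2" if "J \<le> j" for j using J[OF that] by auto
    show "W * \<epsilon> \<le> \<delta> / 2" using W(1) by (simp add: \<epsilon>_def)
    show "thin_average ((\<lambda>j. {G. k ` G \<in> \<F> j}) ` {1..<J}) \<epsilon> UNIV A a"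
      using thin unfolding HH_def .
  qed
  ultimately show False using \<delta> by simp
qed

theorem proposition3p7:
  fixes \<eta> :: cord and \<F> :: "nat \<Rightarrow> nat set set" and w :: "nat \<Rightarrow> real"
  assumes "admissible \<eta>" and "olt OZ \<eta>"
    and "\<And>j. j \<ge> 1 \<Longrightarrow> regular_family (\<F> j)"
    and "\<And>j. j \<ge> 1 \<Longrightarrow> contains_singletons (\<F> j)"
    and "\<And>j. j \<ge> 1 \<Longrightarrow> cb_less (\<F> j) (omega_pow \<eta>)"
    and "\<And>n. n \<ge> 1 \<Longrightarrow> w n > 0"
    and "w \<longlonglongrightarrow> 0"
  shows "weakly_null_xi (z0_norm w \<F>) \<eta> unit_vec"
proof -
  have "\<F> j \<subseteq> fin_subsets" and her: "hereditary (\<F> j)" if "1 \<le> j" for j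
    using assms(3)[OF that] unfolding regular_family_def by blast+
  then have fin: "finite E" if "1 \<le> j" "E \<in> \<F> j" for j E
    using that unfolding fin_subsets_def by blast
  have cb: "cb_iter (\<F> j) (omega_pow \<eta>) = {}" if "1 \<le> j" for j
    using assms(5)[OF that] by (rule cb_less_imp_cb_iter_empty)
  have nonempty: "\<F> 1 \<noteq> {}" using assms(4)[of 1] unfolding contains_singletons_def by auto
  have "bounded_seq (z0_norm w \<F>) unit_vec"
    using nonempty convergent_imp_Bseq[OF convergentI[OF assms(7)]] by (rule bounded_seq_unit_vec)
  moreover have "\<not> l1_spreading_model (z0_norm w \<F>) \<eta> (unit_vec \<circ> k)" if "strict_mono k" for k
    using not_l1_spreading_model_unit_vec[where \<F> = \<F>, OF assms(1) her fin cb nonempty assms(6,7) that]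
    by simp
  ultimately show ?thesis unfolding weakly_null_xi_def by blast
qed

end
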